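(* Let $G$ be a tree with $n\ge k$ vertices and $k\in\{2,3\}$. Then every transition edge between two adjacent configurations of $k$ agents with distinct vertex sets is a $1$-transition edge, and consequently $h^r_k(G)=h_k(G)$.
   Context: All graphs are finite, simple, undirected and connected. A configuration of $k$ agents is a $k$-tuple $(v_1,\dots,v_k)$ of pairwise distinct vertices of $G$ whose induced subgraph is connected; it is identified with its vertex set when convenient. Two configurations $(v_1,\dots,v_k)$, $(v'_1,\dots,v'_k)$ are adjacent if for every $i$ either $v_i=v'_i$ or $(v_i,v'_i)\in E$. The transition edge between adjacent configurations $\mathcal C,\mathcal C'$ is an $r$-transition edge if exactly $r$ vertices of $\mathcal C'$ are not in $\mathcal C$. A transition walk of length $l$ is a sequence $\mathcal C_0,\dots,\mathcal C_l$ of configurations with consecutive ones adjacent; it is spanning if every vertex of $G$ lies in some $\mathcal C_t$. $h_k(G)$ is the minimum length of a spanning transition walk with $k$ agents. $h^r_k(G)$ is the minimum length of a spanning transition walk with $k$ agents in which every pair of consecutive configurations is joined by a $1$-transition edge (the restricted problem $k$-RHWP). *)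

theory Defs
  imports Main
begin

definition simple_graph :: "'a set \<Rightarrow> ('a \<Rightarrow> 'a \<Rightarrow> bool) \<Rightarrow> bool" where
  "simple_graph V E \<longleftrightarrow> finite V \<and> (\<forall>x y. E x y \<longrightarrow> x \<in> V \<and> y \<in> V)
     \<and> (\<forall>x y. E x y \<longrightarrow> E y x) \<and> (\<forall>x. \<not> E x x)"

definition induced_connected :: "('a \<Rightarrow> 'a \<Rightarrow> bool) \<Rightarrow> 'a set \<Rightarrow> bool" where
  "induced_connected E S \<longleftrightarrow>
     (\<forall>x\<in>S. \<forall>y\<in>S. (\<lambda>a b. a \<in> S \<and> b \<in> S \<and> E a b)\<^sup>*\<^sup>* x y)"

definition is_cycle :: "'a set \<Rightarrow> ('a \<Rightarrow> 'a \<Rightarrow> bool) \<Rightarrow> 'a list \<Rightarrow> bool" where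
  "is_cycle V E vs \<longleftrightarrow> length vs \<ge> 3 \<and> distinct vs \<and> set vs \<subseteq> V
     \<and> (\<forall>i. Suc i < length vs \<longrightarrow> E (vs ! i) (vs ! Suc i)) \<and> E (last vs) (hd vs)"

definition is_tree :: "'a set \<Rightarrow> ('a \<Rightarrow> 'a \<Rightarrow> bool) \<Rightarrow> bool" where
  "is_tree V E \<longleftrightarrow> simple_graph V E \<and> V \<noteq> {} \<and> induced_connected E V
     \<and> \<not> (\<exists>vs. is_cycle V E vs)"

definition configuration :: "'a set \<Rightarrow> ('a \<Rightarrow> 'a \<Rightarrow> bool) \<Rightarrow> nat \<Rightarrow> 'a list \<Rightarrow> bool" where
  "configuration V E k C \<longleftrightarrow> length C = k \<and> distinct C \<and> set C \<subseteq> V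
     \<and> induced_connected E (set C)"

definition conf_adjacent :: "('a \<Rightarrow> 'a \<Rightarrow> bool) \<Rightarrow> 'a list \<Rightarrow> 'a list \<Rightarrow> bool" where
  "conf_adjacent E C C' \<longleftrightarrow> list_all2 (\<lambda>v v'. v = v' \<or> E v v') C C'"

text \<open>The transition edge C--C' is an r-transition edge iff exactly r vertices of C'
  are not in C.\<close>
definition transition_number :: "'a list \<Rightarrow> 'a list \<Rightarrow> nat" where
  "transition_number C C' = card (set C' - set C)"

definition transition_walk :: "'a set \<Rightarrow> ('a \<Rightarrow> 'a \<Rightarrow> bool) \<Rightarrow> nat \<Rightarrow> 'a list list \<Rightarrow> bool" where
  "transition_walk V E k cs \<longleftrightarrow> cs \<noteq> [] \<and> (\<forall>C\<in>set cs. configuration V E k C)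
     \<and> (\<forall>i. Suc i < length cs \<longrightarrow> conf_adjacent E (cs ! i) (cs ! Suc i))"

definition spanning_walk :: "'a set \<Rightarrow> 'a list list \<Rightarrow> bool" where
  "spanning_walk V cs \<longleftrightarrow> V \<subseteq> (\<Union>C\<in>set cs. set C)"

definition restricted_walk :: "'a list list \<Rightarrow> bool" where
  "restricted_walk cs \<longleftrightarrow>
     (\<forall>i. Suc i < length cs \<longrightarrow> transition_number (cs ! i) (cs ! Suc i) = 1)"

definition h :: "'a set \<Rightarrow> ('a \<Rightarrow> 'a \<Rightarrow> bool) \<Rightarrow> nat \<Rightarrow> nat" where
  "h V E k = (LEAST l. \<exists>cs. transition_walk V E k cs \<and> spanning_walk V cs
                            \<and> length cs = Suc l)"

definition hr :: "'a set \<Rightarrow> ('a \<Rightarrow> 'a \<Rightarrow> bool) \<Rightarrow> nat \<Rightarrow> nat" where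
  "hr V E k = (LEAST l. \<exists>cs. transition_walk V E k cs \<and> spanning_walk V cs
                             \<and> restricted_walk cs \<and> length cs = Suc l)"

end

theory Submission
  imports Defs
begin

text \<open>Two agents that both enter new vertices in one step would close a cycle: walk from the
  old position of the first to that of the second inside the old connected configuration, and
  back between their new positions inside the new one. With at most three agents these
  connecting walks have at most two edges, and in every case the closed walk contains a cycle;
  so in a tree every step that changes the vertex set is a 1-transition. A step that keeps
  the vertex set can be deleted from a spanning walk once the agents of the rest of the walk are
  renamed accordingly; this gives a restricted spanning walk that is no longer, so
  \<open>h\<^sup>r\<^sub>k = h\<^sub>k\<close>.\<close>

lemma transition_walk_iff_successively:
  "transition_walk V E k cs \<longleftrightarrow>
     cs \<noteq> [] \<and> (\<forall>C\<in>set cs. configuration V E k C) \<and> successively (conf_adjacent E) cs"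
  unfolding transition_walk_def successively_conv_nth by blast

lemma transition_walk_Cons_Cons:
  "transition_walk V E k (C # C' # cs) \<longleftrightarrow>
     configuration V E k C \<and> conf_adjacent E C C' \<and> transition_walk V E k (C' # cs)"
  by (auto simp: transition_walk_iff_successively)

lemma transition_walk_singleton: "transition_walk V E k [C] \<longleftrightarrow> configuration V E k C"
  by (simp add: transition_walk_iff_successively)

lemma tree_sym: "is_tree V E \<Longrightarrow> E x y \<Longrightarrow> E y x"
  unfolding is_tree_def simple_graph_def by blast

lemma tree_irrefl: "is_tree V E \<Longrightarrow> \<not> E x x"
  unfolding is_tree_def simple_graph_def by blast

lemma tree_no_closed_path:
  assumes t: "is_tree V E" and "3 \<le> length vs" "distinct vs"
    and "successively E vs" "E (last vs) (hd vs)"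
  shows False
proof -
  have "set vs \<subseteq> V"
  proof
    fix v assume "v \<in> set vs"
    then obtain i where i: "i < length vs" "v = vs ! i" by (metis in_set_conv_nth)
    have "E (vs ! i) (vs ! Suc i)" if "Suc i < length vs"
      using assms(4) that by (rule successively_nth)
    moreover have "vs ! i = last vs" if "\<not> Suc i < length vs"
      using i that by (subst last_conv_nth) (auto intro: arg_cong[where f = "(!) vs"])
    ultimately show "v \<in> V"
      using t assms(5) i unfolding is_tree_def simple_graph_def by metis
  qed
  then have "is_cycle V E vs"
    using assms unfolding is_cycle_def successively_conv_nth by blast
  then show False using t unfolding is_tree_def by blast
qed

lemma induced_connected_has_neighbour:
  assumes "induced_connected E S" "x \<in> S" "y \<in> S" "x \<noteq> y"
  shows "\<exists>z\<in>S. E x z"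
  using assms unfolding induced_connected_def by (metis (no_types, lifting) converse_rtranclpE)

lemma tree_connected_pair_edge:
  assumes t: "is_tree V E" and "induced_connected E {a, b}" "a \<noteq> b"
  shows "E a b"
  using induced_connected_has_neighbour[OF assms(2)] assms tree_irrefl[OF t] by auto

lemma tree_connected_triple_path:
  assumes t: "is_tree V E" and "induced_connected E {a, b, c}" "distinct [a, b, c]"
  shows "E a b \<or> E a c \<and> E c b"
  using induced_connected_has_neighbour[OF assms(2), of a b]
    induced_connected_has_neighbour[OF assms(2), of b a] assms
    tree_irrefl[OF t] tree_sym[OF t] by auto

lemma tree_triple_no_two_exits:
  assumes t: "is_tree V E"
    and C: "induced_connected E {a, b, c}" "distinct [a, b, c]"
    and C': "induced_connected E {a', b', c'}" "distinct [a', b', c']"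
    and exits: "E a a'" "E b b'" "a' \<notin> {a, b, c}" "b' \<notin> {a, b, c}"
    and moves: "c' = c \<or> E c c'"
  shows False
proof -
  note sym = tree_sym[OF t]
  note no_cycle = tree_no_closed_path[OF t]
  have path: "E a b \<or> E a c \<and> E c b"
    using tree_connected_triple_path[OF t C] .
  have path': "E a' b' \<or> E a' c' \<and> E c' b'"
    using tree_connected_triple_path[OF t C'] .
  \<comment> \<open>The closed walk \<open>a a' (c') b' b (c)\<close> contains a cycle, whichever vertices coincide.\<close>
  show False
  proof (cases "E a' b'")
    case True
    then show False
      using path no_cycle[of "[a, a', b', b]"] no_cycle[of "[a, a', b', b, c]"] exits C' sym C
      by auto
  next
    case False
    with path' have "E a' c'" "E c' b'" by auto
    show False
    proof (cases "c' \<in> {a, b, c}")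
      case False
      then show False
        using path no_cycle[of "[a, a', c', b', b]"] no_cycle[of "[a, a', c', b', b, c]"]
          \<open>E a' c'\<close> \<open>E c' b'\<close> exits C' sym C by auto
    next
      case True
      then show False
        using path no_cycle[of "[a, b', b]"] no_cycle[of "[a, b', b, c]"]
          no_cycle[of "[a, a', b]"] no_cycle[of "[a, a', b, c]"]
          no_cycle[of "[a, a', c, b', b]"] no_cycle[of "[a, a', c]"]
          \<open>E a' c'\<close> \<open>E c' b'\<close> exits C' sym C by auto
    qed
  qed
qed

lemma transition_number_pos:
  assumes "distinct C" "distinct C'" "length C = length C'" "set C \<noteq> set C'"
  shows "0 < transition_number C C'"
proof -
  have "card (set C') = card (set C)" using assms by (simp add: distinct_card)
  then have "\<not> set C' \<subseteq> set C" using assms(4) by (metis card_subset_eq finite_set)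
  then show ?thesis unfolding transition_number_def by (simp add: card_gt_0_iff)
qed

lemma tree_transition_number_le_1:
  assumes t: "is_tree V E" and k: "k \<le> 3"
    and cC: "configuration V E k C" and cC': "configuration V E k C'"
    and adj: "conf_adjacent E C C'"
  shows "transition_number C C' \<le> 1"
proof (rule ccontr)
  assume "\<not> transition_number C C' \<le> 1"
  then obtain x y where new: "x \<in> set C' - set C" "y \<in> set C' - set C" "x \<noteq> y"
    unfolding transition_number_def by (auto simp: card_le_Suc0_iff_eq)
  have "2 \<le> card (set C')"
    using card_mono[of "set C'" "{x, y}"] new by auto
  then have "k = 2 \<or> k = 3"
    using k cC' card_length[of C'] unfolding configuration_def by auto
  then show False
  proof
    assume "k = 2"
    then obtain a b a' b' where ab: "C = [a, b]" "C' = [a', b']"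
      using cC cC' unfolding configuration_def by (auto simp: length_Suc_conv numeral_eq_Suc)
    have d: "a \<noteq> b" "a' \<noteq> b'" and ic: "induced_connected E {a, b}" "induced_connected E {a', b'}"
      using cC cC' ab unfolding configuration_def by auto
    have "a' \<notin> {a, b}" "b' \<notin> {a, b}" using new ab by auto
    moreover have "E a a'" "E b b'" using adj ab calculation unfolding conf_adjacent_def by auto
    ultimately show False
      using tree_no_closed_path[OF t, of "[a, a', b', b]"] d tree_sym[OF t]
        tree_connected_pair_edge[OF t ic(1) d(1)] tree_connected_pair_edge[OF t ic(2) d(2)]
      by auto
  next
    assume "k = 3"
    then obtain a b c a' b' c' where abc: "C = [a, b, c]" "C' = [a', b', c']"
      using cC cC' unfolding configuration_def by (auto simp: length_Suc_conv numeral_eq_Suc)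
    have d: "distinct [a, b, c]" "distinct [a', b', c']"
      and ic: "induced_connected E {a, b, c}" "induced_connected E {a', b', c'}"
      using cC cC' abc unfolding configuration_def by auto
    have moves: "a' = a \<or> E a a'" "b' = b \<or> E b b'" "c' = c \<or> E c c'"
      using adj abc unfolding conf_adjacent_def by auto
    have "a' \<notin> {a, b, c} \<and> b' \<notin> {a, b, c} \<or> a' \<notin> {a, b, c} \<and> c' \<notin> {a, b, c}
        \<or> b' \<notin> {a, b, c} \<and> c' \<notin> {a, b, c}"
      using new abc by auto
    then show False
    proof (elim disjE conjE)
      assume "a' \<notin> {a, b, c}" "b' \<notin> {a, b, c}"
      then show False
        using tree_triple_no_two_exits[OF t ic(1) d(1) ic(2) d(2)] moves by auto
    next
      assume "a' \<notin> {a, b, c}" "c' \<notin> {a, b, c}"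
      moreover have "{a, b, c} = {a, c, b}" "{a', b', c'} = {a', c', b'}" by auto
      ultimately show False
        using tree_triple_no_two_exits[OF t, of a c b a' c' b'] moves d ic by auto
    next
      assume "b' \<notin> {a, b, c}" "c' \<notin> {a, b, c}"
      moreover have "{a, b, c} = {b, c, a}" "{a', b', c'} = {b', c', a'}" by auto
      ultimately show False
        using tree_triple_no_two_exits[OF t, of b c a b' c' a'] moves d ic by auto
    qed
  qed
qed

lemma tree_transition_number_eq_1:
  assumes "is_tree V E" "k \<le> 3" "configuration V E k C" "configuration V E k C'"
    "conf_adjacent E C C'" "set C \<noteq> set C'"
  shows "transition_number C C' = 1"
  using tree_transition_number_le_1[OF assms(1-5)] transition_number_pos[of C C'] assms(3-6)
  unfolding configuration_def by fastforce

lemma conf_adjacent_relabel: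
  assumes "distinct X" "distinct Y" "conf_adjacent E X Y" "distinct Z" "set Z = set X"
  shows "\<exists>Y'. conf_adjacent E Z Y' \<and> distinct Y' \<and> set Y' = set Y"
proof -
  define f where "f x = the (map_of (zip X Y) x)" for x
  have "length X = length Y"
    using assms(3) unfolding conf_adjacent_def by (rule list_all2_lengthD)
  then have f: "map f X = Y"
    by (intro nth_equalityI) (simp_all add: f_def map_of_zip_nth assms(1))
  have "\<forall>x\<in>set X. x = f x \<or> E x (f x)"
    using assms(3) unfolding conf_adjacent_def f[symmetric] list_all2_map2 list_all2_same .
  then have "conf_adjacent E Z (map f Z)"
    unfolding conf_adjacent_def list_all2_map2 list_all2_same assms(5) .
  moreover have "inj_on f (set X)"
    using assms(2) unfolding f[symmetric] distinct_map by blast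
  then have "distinct (map f Z)"
    using assms(4,5) by (simp add: distinct_map)
  moreover have "set (map f Z) = set Y"
    using assms(5) f by (metis list.set_map)
  ultimately show ?thesis by blast
qed

text \<open>The walk is rebuilt from an arbitrary renaming \<open>Z\<close> of its first configuration, since
  deleting a step that keeps the vertex set changes which agent sits on which vertex.\<close>
lemma transition_walk_remdups_adj_from:
  assumes "transition_walk V E k (C # cs)" "configuration V E k Z" "set Z = set C"
  shows "\<exists>ds. transition_walk V E k (Z # ds) \<and> map set (Z # ds) = remdups_adj (map set (C # cs))"
  using assms
proof (induction cs arbitrary: C Z)
  case Nil
  then show ?case by (simp add: transition_walk_singleton)
next
  case (Cons C' cs)
  have adj: "conf_adjacent E C C'" and walk: "transition_walk V E k (C' # cs)"
    and cC: "configuration V E k C"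
    using Cons.prems(1) by (simp_all add: transition_walk_Cons_Cons)
  have cC': "configuration V E k C'"
    using walk by (simp add: transition_walk_iff_successively)
  show ?case
  proof (cases "set C = set C'")
    case True
    then show ?thesis using Cons.IH[OF walk Cons.prems(2)] Cons.prems(3) by simp
  next
    case False
    obtain Y where Y: "conf_adjacent E Z Y" "distinct Y" "set Y = set C'"
      using conf_adjacent_relabel[OF _ _ adj] cC cC' Cons.prems(2,3)
      unfolding configuration_def by blast
    have "configuration V E k Y"
      using Y cC' Cons.prems(2) list_all2_lengthD[OF Y(1)[unfolded conf_adjacent_def]]
      unfolding configuration_def by simp
    then obtain ds where "transition_walk V E k (Y # ds)"
      "map set (Y # ds) = remdups_adj (map set (C' # cs))"
      using Cons.IH[OF walk _ Y(3)] by blast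
    then show ?thesis
      using False Y(1) Cons.prems(2,3)
      by (intro exI[of _ "Y # ds"]) (simp add: transition_walk_Cons_Cons)
  qed
qed

lemma transition_walk_remdups_adj:
  assumes "transition_walk V E k cs"
  shows "\<exists>ds. transition_walk V E k ds \<and> map set ds = remdups_adj (map set cs)"
proof -
  obtain C cs' where cs: "cs = C # cs'"
    using assms by (cases cs) (auto simp: transition_walk_def)
  have "configuration V E k C" using assms cs by (simp add: transition_walk_def)
  then show ?thesis
    using transition_walk_remdups_adj_from[of V E k C cs' C] assms cs by blast
qed

lemma tree_restricted_walk_if_distinct_adj:
  assumes t: "is_tree V E" and k: "k \<le> 3"
    and walk: "transition_walk V E k cs" and dist: "distinct_adj (map set cs)"
  shows "restricted_walk cs"
  unfolding restricted_walk_def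
proof (intro allI impI)
  fix i assume i: "Suc i < length cs"
  then have "configuration V E k (cs ! i)" "configuration V E k (cs ! Suc i)"
    "conf_adjacent E (cs ! i) (cs ! Suc i)"
    using walk unfolding transition_walk_def by auto
  moreover have "set (cs ! i) \<noteq> set (cs ! Suc i)"
    using distinct_adj_nth[OF dist, of i] i by simp
  ultimately show "transition_number (cs ! i) (cs ! Suc i) = 1"
    using tree_transition_number_eq_1[OF t k] by blast
qed

lemma tree_restricted_spanning_walk:
  assumes t: "is_tree V E" and k: "k \<le> 3"
    and walk: "transition_walk V E k cs" and span: "spanning_walk V cs"
  obtains ds where "transition_walk V E k ds" "spanning_walk V ds" "restricted_walk ds"
    "length ds \<le> length cs"
proof -
  obtain ds where ds: "transition_walk V E k ds" "map set ds = remdups_adj (map set cs)"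
    using transition_walk_remdups_adj[OF walk] by blast
  have "(\<Union>C\<in>set ds. set C) = (\<Union>C\<in>set cs. set C)"
    using arg_cong[OF ds(2), of "\<lambda>xs. \<Union> (set xs)"] by simp
  then have "spanning_walk V ds"
    using span unfolding spanning_walk_def by simp
  moreover have "restricted_walk ds"
    using tree_restricted_walk_if_distinct_adj[OF t k ds(1)] ds(2) by simp
  moreover have "length ds \<le> length cs"
    using arg_cong[OF ds(2), of length] remdups_adj_length[of "map set cs"] by simp
  ultimately show ?thesis using that ds(1) by blast
qed

lemma Least_eq_if_dominated:
  fixes P Q :: "nat \<Rightarrow> bool"
  assumes QP: "\<And>l. Q l \<Longrightarrow> P l" and PQ: "\<And>l. P l \<Longrightarrow> \<exists>l'\<le>l. Q l'"
  shows "Least Q = Least P"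
proof (cases "\<exists>l. P l")
  case True
  then obtain l' where l': "l' \<le> Least P" "Q l'"
    using PQ LeastI_ex by blast
  have "Least Q \<le> l'" using l'(2) by (rule Least_le)
  moreover have "Least P \<le> Least Q" using QP l'(2) by (metis LeastI Least_le)
  ultimately show ?thesis using l'(1) by simp
next
  case False
  then have "P = (\<lambda>_. False)" "Q = (\<lambda>_. False)" using QP by auto
  then show ?thesis by simp
qed

theorem mainTheorem4:
  fixes V :: "'a set" and E :: "'a \<Rightarrow> 'a \<Rightarrow> bool" and k :: nat
  assumes "is_tree V E"
    and "card V \<ge> k"
    and "k \<in> {2, 3}"
  shows "(\<forall>C C'. configuration V E k C \<and> configuration V E k C' \<and> conf_adjacent E C C'
            \<and> set C \<noteq> set C' \<longrightarrow> transition_number C C' = 1)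
         \<and> hr V E k = h V E k"
proof
  have k: "k \<le> 3" using assms(3) by auto
  then show "\<forall>C C'. configuration V E k C \<and> configuration V E k C' \<and> conf_adjacent E C C'
            \<and> set C \<noteq> set C' \<longrightarrow> transition_number C C' = 1"
    using tree_transition_number_eq_1[OF assms(1)] by blast
  show "hr V E k = h V E k"
    unfolding hr_def h_def
  proof (rule Least_eq_if_dominated)
    fix l
    assume "\<exists>cs. transition_walk V E k cs \<and> spanning_walk V cs \<and> length cs = Suc l"
    then obtain cs where cs: "transition_walk V E k cs" "spanning_walk V cs" "length cs = Suc l"
      by blast
    obtain ds where "transition_walk V E k ds" "spanning_walk V ds" "restricted_walk ds"
      "length ds \<le> length cs"
      using tree_restricted_spanning_walk[OF assms(1) k cs(1,2)] by blast
    then show "\<exists>l'\<le>l. \<exists>cs. transition_walk V E k cs \<and> spanning_walk V cs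
                          \<and> restricted_walk cs \<and> length cs = Suc l'"
      using cs(3) by (intro exI[of _ "length ds - 1"]) (auto simp: transition_walk_def)
  qed blast
qed

end
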